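(* Let $E$ be a topological space, let $\Omega\subseteq E$ be a non-empty relatively compact open set with $\partial\Omega\neq\emptyset$, and let $Y$ be a real locally convex Hausdorff topological vector space. For any continuous function $f:\Omega\to Y$, at least one of the following holds: (i) $f$ satisfies the convex hull-like property in $\Omega$; (ii) there exists a non-empty open set $X\subseteq\Omega$ with $\overline{X}\subseteq\Omega$ such that for every continuous function $g:\Omega\to Y$ there exists $\tilde\lambda\ge 0$ such that, for each $\lambda>\tilde\lambda$, the set $(g+\lambda f)(X)$ is supported at one of its points.
   Context: $\overline{\Omega}$, $\partial\Omega$ denote closure and boundary in $E$. A function $\psi:Y\to\mathbf{R}$ is quasi-convex if for each $r\in\mathbf{R}$ the set $\psi^{-1}(]-\infty,r])$ is convex. A continuous function $f:\Omega\to Y$ satisfies the convex hull-like property in $\Omega$ if for every continuous quasi-convex $\psi:Y\to\mathbf{R}$ there exists $x^*\in\partial\Omega$ such that $\limsup_{x\to x^*,\,x\in\Omega}\psi(f(x))=\sup_{x\in\Omega}\psi(f(x))$. A set $S\subseteq Y$ is supported at $y_0\in S$ if there exists a continuous linear functional $\varphi\in Y^*\setminus\{0\}$ with $\varphi(y_0)\le\varphi(y)$ for all $y\in S$. *)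

theory Defs
  imports "HOL-Analysis.Analysis"
begin

definition lc_hausdorff_tvs :: "'b::real_vector topology \<Rightarrow> bool" where
  "lc_hausdorff_tvs T \<longleftrightarrow>
     topspace T = UNIV \<and>
     continuous_map (prod_topology T T) T (\<lambda>(x, y). x + y) \<and>
     continuous_map (prod_topology euclideanreal T) T (\<lambda>(a, x). a *\<^sub>R x) \<and>
     Hausdorff_space T \<and>
     (\<forall>U x. openin T U \<and> x \<in> U \<longrightarrow> (\<exists>V. openin T V \<and> convex V \<and> x \<in> V \<and> V \<subseteq> U))"

definition quasi_convex :: "('b::real_vector \<Rightarrow> real) \<Rightarrow> bool" where
  "quasi_convex \<psi> \<longleftrightarrow> (\<forall>r. convex (\<psi> -` {..r}))"

definition convex_hull_like :: "'b::real_vector topology \<Rightarrow> ('a::topological_space \<Rightarrow> 'b) \<Rightarrow> 'a set \<Rightarrow> bool" where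
  "convex_hull_like T f \<Omega> \<longleftrightarrow>
     (\<forall>\<psi>. continuous_map T euclideanreal \<psi> \<and> quasi_convex \<psi> \<longrightarrow>
        (\<exists>xs \<in> frontier \<Omega>.
           Limsup (at xs within \<Omega>) (\<lambda>x. ereal (\<psi> (f x))) = (SUP x\<in>\<Omega>. ereal (\<psi> (f x)))))"

definition supported_at :: "'b::real_vector topology \<Rightarrow> 'b set \<Rightarrow> 'b \<Rightarrow> bool" where
  "supported_at T S y0 \<longleftrightarrow> y0 \<in> S \<and>
     (\<exists>\<phi>::'b \<Rightarrow> real. linear \<phi> \<and> continuous_map T euclideanreal \<phi> \<and> \<phi> \<noteq> (\<lambda>_. 0) \<and>
        (\<forall>y\<in>S. \<phi> y0 \<le> \<phi> y))"

end

theory Submission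
  imports Defs
begin

text \<open>If f fails the convex hull-like property, some continuous quasi-convex \<psi> makes the
  boundary limsups of \<psi> \<circ> f strictly smaller than its supremum. By compactness of the frontier
  a superlevel set X of \<psi> \<circ> f is then compactly contained in \<Omega>, and for a point x0 \<in> X the
  open convex set {\<psi> < \<psi> (f x0)} contains f(\<Omega> - X) but not f x0. A Hahn-Banach separation
  gives a continuous linear \<phi> with \<phi> (f x0) < \<phi> \<circ> f on \<Omega> - X. For any continuous g and
  large \<lambda>, the minimum of \<phi> \<circ> (g + \<lambda> f) over the compact closure of X is therefore attained
  in X, and \<phi> supports (g + \<lambda> f)(X) there.\<close>

section \<open>The Hahn-Banach theorem\<close>

locale sublinear =
  fixes p :: "'b::real_vector \<Rightarrow> real"
  assumes subadditive: "p (x + y) \<le> p x + p y"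
    and positive_homogeneous: "c > 0 \<Longrightarrow> p (c *\<^sub>R x) = c * p x"
begin

lemma zero [simp]: "p 0 = 0"
  using positive_homogeneous[of 2 0] by simp

lemma neg_le: "- p (- x) \<le> p x"
  using subadditive[of x "- x"] by simp

lemma scaleR_le: "t * p x \<le> p (t *\<^sub>R x)"
proof -
  consider "t > 0" | "t = 0" | "t < 0" by linarith
  then show ?thesis
  proof cases
    case 3
    then have "p ((- t) *\<^sub>R x) = - t * p x" using positive_homogeneous[of "- t"] by simp
    then show ?thesis using neg_le[of "t *\<^sub>R x"] by simp
  qed (simp_all add: positive_homogeneous)
qed

end

text \<open>Partial linear functionals dominated by p are handled through their graphs, so that
  Zorn's lemma applies to the subset order.\<close>
definition dominated_linear_graph :: "('b::real_vector \<Rightarrow> real) \<Rightarrow> ('b \<times> real) set \<Rightarrow> bool" where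
  "dominated_linear_graph p G \<longleftrightarrow>
     (\<forall>x a b. (x, a) \<in> G \<longrightarrow> (x, b) \<in> G \<longrightarrow> a = b) \<and>
     (\<forall>x a. (x, a) \<in> G \<longrightarrow> a \<le> p x) \<and>
     (\<forall>x y a b. (x, a) \<in> G \<longrightarrow> (y, b) \<in> G \<longrightarrow> (x + y, a + b) \<in> G) \<and>
     (\<forall>x a c. (x, a) \<in> G \<longrightarrow> (c *\<^sub>R x, c * a) \<in> G)"

lemma dominated_linear_graphI:
  assumes "\<And>x a b. (x, a) \<in> G \<Longrightarrow> (x, b) \<in> G \<Longrightarrow> a = b"
    and "\<And>x a. (x, a) \<in> G \<Longrightarrow> a \<le> p x"
    and "\<And>x y a b. (x, a) \<in> G \<Longrightarrow> (y, b) \<in> G \<Longrightarrow> (x + y, a + b) \<in> G"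
    and "\<And>x a c. (x, a) \<in> G \<Longrightarrow> (c *\<^sub>R x, c * a) \<in> G"
  shows "dominated_linear_graph p G"
  using assms unfolding dominated_linear_graph_def by blast

context
  fixes p :: "'b::real_vector \<Rightarrow> real" and G :: "('b \<times> real) set"
  assumes G: "dominated_linear_graph p G"
begin

lemma dominated_linear_graph_unique: "(x, a) \<in> G \<Longrightarrow> (x, b) \<in> G \<Longrightarrow> a = b"
  using G unfolding dominated_linear_graph_def by blast

lemma dominated_linear_graph_le: "(x, a) \<in> G \<Longrightarrow> a \<le> p x"
  using G unfolding dominated_linear_graph_def by blast

lemma dominated_linear_graph_add: "(x, a) \<in> G \<Longrightarrow> (y, b) \<in> G \<Longrightarrow> (x + y, a + b) \<in> G"
  using G unfolding dominated_linear_graph_def by blast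

lemma dominated_linear_graph_scaleR: "(x, a) \<in> G \<Longrightarrow> (c *\<^sub>R x, c * a) \<in> G"
  using G unfolding dominated_linear_graph_def by blast

lemma dominated_linear_graph_zero: "G \<noteq> {} \<Longrightarrow> (0, 0) \<in> G"
  using dominated_linear_graph_scaleR[of _ _ 0] by fastforce

lemma dominated_linear_graph_diff: "(x, a) \<in> G \<Longrightarrow> (y, b) \<in> G \<Longrightarrow> (x - y, a - b) \<in> G"
  using dominated_linear_graph_add dominated_linear_graph_scaleR[of y b "-1"] by fastforce

end

lemma (in sublinear) dominated_linear_graph_line:
  "dominated_linear_graph p (range (\<lambda>t. (t *\<^sub>R v, t * p v)))"
proof (rule dominated_linear_graphI)
  fix x a b assume "(x, a) \<in> range (\<lambda>t. (t *\<^sub>R v, t * p v))" "(x, b) \<in> range (\<lambda>t. (t *\<^sub>R v, t * p v))"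
  then obtain s t where "(x, a) = (s *\<^sub>R v, s * p v)" "(x, b) = (t *\<^sub>R v, t * p v)" by blast
  then show "a = b" by (cases "v = 0") (auto simp: scaleR_cancel_right)
next
  fix x y a b assume "(x, a) \<in> range (\<lambda>t. (t *\<^sub>R v, t * p v))" "(y, b) \<in> range (\<lambda>t. (t *\<^sub>R v, t * p v))"
  then show "(x + y, a + b) \<in> range (\<lambda>t. (t *\<^sub>R v, t * p v))"
    by (auto intro!: image_eqI[where x = "_ + _"] simp: scaleR_add_left distrib_right)
qed (auto simp: scaleR_le intro!: image_eqI[where x = "_ * _"])

lemma dominated_linear_graph_chain_Union:
  assumes "C \<in> chains {G. dominated_linear_graph p G}"
  shows "dominated_linear_graph p (\<Union>C)"
proof -
  have chain: "A \<subseteq> B \<or> B \<subseteq> A" if "A \<in> C" "B \<in> C" for A B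
    using assms that unfolding chains_def chain_subset_def by blast
  have G: "dominated_linear_graph p A" if "A \<in> C" for A
    using assms that unfolding chains_def by blast
  have common: "\<exists>D\<in>C. u \<in> D \<and> w \<in> D" if "u \<in> \<Union>C" "w \<in> \<Union>C" for u w
    using that chain by blast
  show ?thesis
  proof (rule dominated_linear_graphI)
    fix x a b assume "(x, a) \<in> \<Union>C" "(x, b) \<in> \<Union>C"
    then show "a = b" using common dominated_linear_graph_unique[OF G] by metis
  next
    fix x a assume "(x, a) \<in> \<Union>C"
    then show "a \<le> p x" using dominated_linear_graph_le[OF G] by blast
  next
    fix x y a b assume "(x, a) \<in> \<Union>C" "(y, b) \<in> \<Union>C"
    then show "(x + y, a + b) \<in> \<Union>C" using common dominated_linear_graph_add[OF G] by (metis UnionI)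
  next
    fix x a c assume "(x, a) \<in> \<Union>C"
    then show "(c *\<^sub>R x, c * a) \<in> \<Union>C" using dominated_linear_graph_scaleR[OF G] by blast
  qed
qed

lemma (in sublinear) dominated_extension_constant:
  assumes G: "dominated_linear_graph p G" and "G \<noteq> {}"
  obtains c where "\<And>x a. (x, a) \<in> G \<Longrightarrow> a - p (x - w) \<le> c \<and> c \<le> p (x + w) - a"
proof -
  have sep: "a - p (x - w) \<le> p (y + w) - b" if "(x, a) \<in> G" "(y, b) \<in> G" for x y a b
  proof -
    have "a + b \<le> p ((x - w) + (y + w))"
      using dominated_linear_graph_le[OF G dominated_linear_graph_add[OF G that]] by simp
    also have "\<dots> \<le> p (x - w) + p (y + w)" by (rule subadditive)
    finally show ?thesis by simp
  qed
  define L where "L = {a - p (x - w) | x a. (x, a) \<in> G}"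
  have "L \<noteq> {}" using assms(2) unfolding L_def by auto
  moreover have "bdd_above L"
    using sep[OF _ dominated_linear_graph_zero[OF G assms(2)]] unfolding L_def bdd_above_def by auto
  ultimately show ?thesis
    using sep by (intro that[of "Sup L"]) (auto simp: L_def intro!: cSup_upper cSup_least)
qed

lemma (in sublinear) dominated_extension_le:
  assumes G: "dominated_linear_graph p G"
    and c: "\<And>x a. (x, a) \<in> G \<Longrightarrow> a - p (x - w) \<le> c \<and> c \<le> p (x + w) - a"
    and xa: "(x, a) \<in> G"
  shows "a + t * c \<le> p (x + t *\<^sub>R w)"
proof -
  consider "t > 0" | "t = 0" | "t < 0" by linarith
  then show ?thesis
  proof cases
    case 1
    have "t * (a / t + c) \<le> t * p ((1 / t) *\<^sub>R x + w)"
      using c[OF dominated_linear_graph_scaleR[OF G xa, of "1 / t"]] 1 by simp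
    also have "\<dots> = p (x + t *\<^sub>R w)"
      using 1 by (simp add: positive_homogeneous[symmetric] scaleR_add_right)
    finally show ?thesis using 1 by (simp add: algebra_simps)
  next
    case 2
    then show ?thesis using dominated_linear_graph_le[OF G xa] by simp
  next
    case 3
    have "- t * (a / - t - c) \<le> - t * p ((1 / - t) *\<^sub>R x - w)"
      using c[OF dominated_linear_graph_scaleR[OF G xa, of "1 / - t"]] 3 by simp
    also have "\<dots> = p ((- t) *\<^sub>R ((1 / - t) *\<^sub>R x - w))"
      using 3 positive_homogeneous[of "- t"] by simp
    also have "(- t) *\<^sub>R ((1 / - t) *\<^sub>R x - w) = x + t *\<^sub>R w"
      using 3 by (simp add: scaleR_diff_right)
    finally show ?thesis using 3 by (simp add: algebra_simps)
  qed
qed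

lemma (in sublinear) dominated_linear_graph_extend:
  assumes G: "dominated_linear_graph p G" and "G \<noteq> {}" and w: "\<And>a. (w, a) \<notin> G"
  obtains G' where "dominated_linear_graph p G'" "G \<subset> G'"
proof -
  obtain c where c: "\<And>x a. (x, a) \<in> G \<Longrightarrow> a - p (x - w) \<le> c \<and> c \<le> p (x + w) - a"
    using dominated_extension_constant[OF assms(1,2)] by blast
  define G' where "G' = {(x + t *\<^sub>R w, a + t * c) | x a t. (x, a) \<in> G}"
  have G'I: "(x + t *\<^sub>R w, a + t * c) \<in> G'" if "(x, a) \<in> G" for x a t
    unfolding G'_def using that by blast
  have unique: "x = y \<and> s = t" if "(x, a) \<in> G" "(y, b) \<in> G" "x + s *\<^sub>R w = y + t *\<^sub>R w"
    for x y a b s t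
  proof (rule ccontr)
    assume "\<not> (x = y \<and> s = t)"
    then have "s \<noteq> t" using that(3) by auto
    then have "w = (1 / (s - t)) *\<^sub>R ((s - t) *\<^sub>R w)" by simp
    also have "(s - t) *\<^sub>R w = y - x" using that(3) by (simp add: algebra_simps)
    finally have "w = (1 / (s - t)) *\<^sub>R (y - x)" .
    then show False
      using w dominated_linear_graph_scaleR[OF G dominated_linear_graph_diff[OF G that(2,1)]] by metis
  qed
  have "dominated_linear_graph p G'"
  proof (rule dominated_linear_graphI)
    fix z a b assume "(z, a) \<in> G'" "(z, b) \<in> G'"
    then obtain x y a' b' s t where xy: "(x, a') \<in> G" "(y, b') \<in> G"
      and z: "z = x + s *\<^sub>R w" "z = y + t *\<^sub>R w" and "a = a' + s * c" "b = b' + t * c"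
      unfolding G'_def by blast
    moreover have "x = y" "s = t" using unique[OF xy, of s t] z by auto
    ultimately show "a = b" using dominated_linear_graph_unique[OF G] by simp
  next
    fix z a assume "(z, a) \<in> G'"
    then show "a \<le> p z" unfolding G'_def using dominated_extension_le[OF G c] by blast
  next
    fix z z' a b assume "(z, a) \<in> G'" "(z', b) \<in> G'"
    then obtain x y a' b' s t where "(x, a') \<in> G" "(y, b') \<in> G"
      "z = x + s *\<^sub>R w" "a = a' + s * c" "z' = y + t *\<^sub>R w" "b = b' + t * c"
      unfolding G'_def by blast
    then show "(z + z', a + b) \<in> G'"
      using G'I[OF dominated_linear_graph_add[OF G], of x a' y b' "s + t"]
      by (simp add: algebra_simps scaleR_add_left)
  next
    fix z a d assume "(z, a) \<in> G'"
    then obtain x a' t where "(x, a') \<in> G" "z = x + t *\<^sub>R w" "a = a' + t * c"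
      unfolding G'_def by blast
    then show "(d *\<^sub>R z, d * a) \<in> G'"
      using G'I[OF dominated_linear_graph_scaleR[OF G], of x a' d "d * t"]
      by (simp add: algebra_simps scaleR_add_right)
  qed
  moreover have "G \<subseteq> G'" using G'I[of _ _ 0] by auto
  moreover have "(w, c) \<in> G' - G"
    using G'I[OF dominated_linear_graph_zero[OF G assms(2)], of 1] w by simp
  ultimately show ?thesis using that by blast
qed

theorem (in sublinear) Hahn_Banach:
  obtains \<phi> where "linear \<phi>" "\<And>x. \<phi> x \<le> p x" "\<phi> v = p v"
proof -
  let ?\<G> = "{G. dominated_linear_graph p G \<and> (v, p v) \<in> G}"
  have "\<exists>M\<in>?\<G>. \<forall>G\<in>?\<G>. M \<subseteq> G \<longrightarrow> G = M"
  proof (rule Zorn_Lemma2, intro ballI)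
    fix C assume C: "C \<in> chains ?\<G>"
    then have chain: "C \<in> chains {G. dominated_linear_graph p G}"
      unfolding chains_def by blast
    show "\<exists>U\<in>?\<G>. \<forall>G\<in>C. G \<subseteq> U"
    proof (cases "C = {}")
      case True
      have "(v, p v) \<in> range (\<lambda>t. (t *\<^sub>R v, t * p v))" by (auto intro: image_eqI[of _ _ 1])
      with True show ?thesis using dominated_linear_graph_line by blast
    next
      case False
      then have "(v, p v) \<in> \<Union>C" using C unfolding chains_def by blast
      then show ?thesis using dominated_linear_graph_chain_Union[OF chain] by blast
    qed
  qed
  then obtain M where M: "dominated_linear_graph p M" "(v, p v) \<in> M"
    and maximal: "\<And>G. dominated_linear_graph p G \<Longrightarrow> M \<subseteq> G \<Longrightarrow> G = M"
    by blast
  have total: "\<exists>a. (x, a) \<in> M" for x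
    using dominated_linear_graph_extend[OF M(1)] maximal M(2) by blast
  define \<phi> where "\<phi> x = (THE a. (x, a) \<in> M)" for x
  have \<phi>_eq: "\<phi> x = a" if "(x, a) \<in> M" for x a
    unfolding \<phi>_def using that dominated_linear_graph_unique[OF M(1)] by blast
  have graph: "(x, \<phi> x) \<in> M" for x
    using total[of x] \<phi>_eq by blast
  show ?thesis
  proof
    show "linear \<phi>"
      by (rule linearI) (auto intro!: \<phi>_eq graph dominated_linear_graph_add[OF M(1)]
          dominated_linear_graph_scaleR[OF M(1)])
  qed (use dominated_linear_graph_le[OF M(1) graph] \<phi>_eq[OF M(2)] in auto)
qed

section \<open>The Minkowski functional\<close>

definition minkowski_functional :: "'b::real_vector set \<Rightarrow> 'b \<Rightarrow> real" where
  "minkowski_functional U x = Inf {t. t > 0 \<and> (1 / t) *\<^sub>R x \<in> U}"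

locale absorbing_convex =
  fixes U :: "'b::real_vector set"
  assumes convex: "convex U" and zero_mem: "0 \<in> U"
    and absorbing: "\<And>x. \<exists>t>0. (1 / t) *\<^sub>R x \<in> U"
begin

lemma scaled_mem_mono:
  assumes "t > 0" "(1 / t) *\<^sub>R x \<in> U" "t \<le> t'"
  shows "(1 / t') *\<^sub>R x \<in> U"
proof -
  have "(t / t') *\<^sub>R ((1 / t) *\<^sub>R x) + (1 - t / t') *\<^sub>R 0 \<in> U"
    using assms by (intro convexD[OF convex _ zero_mem]) auto
  then show ?thesis using assms by simp
qed

lemma scaled_mem_add:
  assumes "s > 0" "(1 / s) *\<^sub>R x \<in> U" "t > 0" "(1 / t) *\<^sub>R y \<in> U"
  shows "(1 / (s + t)) *\<^sub>R (x + y) \<in> U"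
proof -
  have "(s / (s + t)) *\<^sub>R ((1 / s) *\<^sub>R x) + (t / (s + t)) *\<^sub>R ((1 / t) *\<^sub>R y) \<in> U"
    using assms by (intro convexD[OF convex]) (auto simp: add_divide_distrib[symmetric])
  then show ?thesis using assms by (simp add: scaleR_add_right)
qed

lemma minkowski_functional_le: "t > 0 \<Longrightarrow> (1 / t) *\<^sub>R x \<in> U \<Longrightarrow> minkowski_functional U x \<le> t"
  unfolding minkowski_functional_def by (rule cInf_lower) (auto intro: bdd_belowI[of _ 0])

lemma le_minkowski_functional:
  "(\<And>t. t > 0 \<Longrightarrow> (1 / t) *\<^sub>R x \<in> U \<Longrightarrow> r \<le> t) \<Longrightarrow> r \<le> minkowski_functional U x"
  unfolding minkowski_functional_def using absorbing[of x] by (intro cInf_greatest) auto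

lemma minkowski_functional_less_imp_mem:
  assumes "minkowski_functional U x < r"
  shows "\<exists>t>0. t < r \<and> (1 / t) *\<^sub>R x \<in> U"
  using assms absorbing[of x] cInf_lessD[of "{t. t > 0 \<and> (1 / t) *\<^sub>R x \<in> U}"]
  unfolding minkowski_functional_def by auto

lemma minkowski_functional_add:
  "minkowski_functional U (x + y) \<le> minkowski_functional U x + minkowski_functional U y"
proof -
  have "minkowski_functional U (x + y) - t \<le> minkowski_functional U x"
    if t: "t > 0" "(1 / t) *\<^sub>R y \<in> U" for t
  proof (rule le_minkowski_functional)
    fix s assume "s > 0" "(1 / s) *\<^sub>R x \<in> U"
    then have "minkowski_functional U (x + y) \<le> s + t"
      using scaled_mem_add t by (intro minkowski_functional_le) auto
    then show "minkowski_functional U (x + y) - t \<le> s" by simp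
  qed
  then have "minkowski_functional U (x + y) - minkowski_functional U x \<le> minkowski_functional U y"
    by (intro le_minkowski_functional) fastforce
  then show ?thesis by simp
qed

lemma minkowski_functional_scaleR_le:
  assumes "c > 0"
  shows "minkowski_functional U (c *\<^sub>R x) \<le> c * minkowski_functional U x"
proof -
  have "minkowski_functional U (c *\<^sub>R x) / c \<le> t" if "t > 0" "(1 / t) *\<^sub>R x \<in> U" for t
  proof -
    have "minkowski_functional U (c *\<^sub>R x) \<le> c * t"
      using that assms by (intro minkowski_functional_le) auto
    then show ?thesis using assms by (simp add: divide_le_eq mult.commute)
  qed
  then have "minkowski_functional U (c *\<^sub>R x) / c \<le> minkowski_functional U x"
    by (rule le_minkowski_functional)
  then show ?thesis using assms by (simp add: divide_le_eq mult.commute)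
qed

lemma sublinear_minkowski_functional: "sublinear (minkowski_functional U)"
proof
  fix c :: real and x assume c: "c > 0"
  have "minkowski_functional U x = minkowski_functional U ((1 / c) *\<^sub>R (c *\<^sub>R x))"
    using c by simp
  also have "\<dots> \<le> (1 / c) * minkowski_functional U (c *\<^sub>R x)"
    using c by (intro minkowski_functional_scaleR_le) simp
  finally have "c * minkowski_functional U x \<le> minkowski_functional U (c *\<^sub>R x)"
    using c by (simp add: field_simps)
  with minkowski_functional_scaleR_le[OF c, of x]
  show "minkowski_functional U (c *\<^sub>R x) = c * minkowski_functional U x" by simp
qed (rule minkowski_functional_add)

lemma one_le_minkowski_functional: "v \<notin> U \<Longrightarrow> 1 \<le> minkowski_functional U v"
  using minkowski_functional_less_imp_mem[of v 1] scaled_mem_mono[of _ v 1] by force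

lemma minkowski_functional_less_one:
  assumes "e > 0" "(1 + e) *\<^sub>R u \<in> U"
  shows "minkowski_functional U u < 1"
proof -
  have "minkowski_functional U u \<le> 1 / (1 + e)"
    using assms by (intro minkowski_functional_le) auto
  also have "\<dots> < 1" using assms(1) by simp
  finally show ?thesis .
qed

end

section \<open>Separation in topological vector spaces\<close>

context
  fixes T :: "'b::real_vector topology"
  assumes T: "lc_hausdorff_tvs T"
begin

lemma topspace_lc_hausdorff_tvs: "topspace T = UNIV"
  using T unfolding lc_hausdorff_tvs_def by blast

lemma continuous_map_tvs_add:
  assumes "continuous_map X T f" "continuous_map X T g"
  shows "continuous_map X T (\<lambda>z. f z + g z)"
proof -
  have "continuous_map (prod_topology T T) T (\<lambda>(x, y). x + y)"
    using T unfolding lc_hausdorff_tvs_def by blast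
  from continuous_map_compose[OF continuous_map_pairedI[OF assms] this] show ?thesis
    by (simp add: o_def)
qed

lemma continuous_map_tvs_scaleR:
  assumes "continuous_map X euclideanreal c" "continuous_map X T f"
  shows "continuous_map X T (\<lambda>z. c z *\<^sub>R f z)"
proof -
  have "continuous_map (prod_topology euclideanreal T) T (\<lambda>(a, x). a *\<^sub>R x)"
    using T unfolding lc_hausdorff_tvs_def by blast
  from continuous_map_compose[OF continuous_map_pairedI[OF assms] this] show ?thesis
    by (simp add: o_def)
qed

lemma continuous_map_tvs_const: "continuous_map X T (\<lambda>z. y)"
  using topspace_lc_hausdorff_tvs by simp

lemma continuous_map_tvs_affine: "continuous_map T T (\<lambda>y. c *\<^sub>R (y + b))"
  by (intro continuous_map_tvs_scaleR continuous_map_tvs_add continuous_map_tvs_const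
      continuous_map_id[unfolded id_def] continuous_map_const[THEN iffD2]) simp

lemma openin_tvs_line:
  assumes "openin T A" "r0 *\<^sub>R x + a \<in> A"
  obtains e where "e > 0" "\<And>r. \<bar>r - r0\<bar> < e \<Longrightarrow> r *\<^sub>R x + a \<in> A"
proof -
  have "continuous_map euclideanreal T (\<lambda>r. r *\<^sub>R x + a)"
    by (intro continuous_map_tvs_add continuous_map_tvs_scaleR continuous_map_tvs_const
        continuous_map_id[unfolded id_def])
  from openin_continuous_map_preimage[OF this assms(1)]
  have "open {r. r *\<^sub>R x + a \<in> A}" by simp
  then obtain e where "e > 0" "ball r0 e \<subseteq> {r. r *\<^sub>R x + a \<in> A}"
    using assms(2) open_contains_ball by blast
  then show ?thesis by (intro that[of e]) (auto simp: subset_iff dist_real_def abs_minus_commute)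
qed

text \<open>A linear functional bounded above on a neighbourhood U of 0 is bounded in absolute
  value on the symmetric neighbourhood U \<inter> -U, hence continuous.\<close>
lemma continuous_map_linear_bounded_above:
  assumes U: "openin T U" "0 \<in> U" and \<phi>: "linear \<phi>" and bounded: "\<And>u. u \<in> U \<Longrightarrow> \<phi> u < 1"
  shows "continuous_map T euclideanreal \<phi>"
  unfolding continuous_map_def
proof (intro conjI allI impI)
  fix S :: "real set" assume "openin euclideanreal S"
  show "openin T {x \<in> topspace T. \<phi> x \<in> S}"
  proof (subst openin_subopen, intro ballI)
    fix x assume "x \<in> {x \<in> topspace T. \<phi> x \<in> S}"
    then obtain e where e: "e > 0" "ball (\<phi> x) e \<subseteq> S"
      using \<open>openin euclideanreal S\<close> open_contains_ball by force
    define V where "V = {y \<in> topspace T. (2 / e) *\<^sub>R (y + - x) \<in> U}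
      \<inter> {y \<in> topspace T. (- (2 / e)) *\<^sub>R (y + - x) \<in> U}"
    have "openin T V" unfolding V_def
      by (intro openin_Int openin_continuous_map_preimage[OF continuous_map_tvs_affine U(1)])
    moreover have "x \<in> V" using U(2) by (simp add: V_def topspace_lc_hausdorff_tvs)
    moreover have "V \<subseteq> {x \<in> topspace T. \<phi> x \<in> S}"
    proof
      fix y assume "y \<in> V"
      moreover have "\<phi> (c *\<^sub>R (y + - x)) = c * (\<phi> y - \<phi> x)" for c
        using linear_scale[OF \<phi>] linear_diff[OF \<phi>] by simp
      ultimately have "(2 / e) * (\<phi> y - \<phi> x) < 1" "(- (2 / e)) * (\<phi> y - \<phi> x) < 1"
        using bounded unfolding V_def by (metis (no_types, lifting) Int_iff mem_Collect_eq)+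
      then have "\<phi> y \<in> ball (\<phi> x) e"
        using e(1) by (auto simp: field_simps abs_less_iff dist_real_def)
      then show "y \<in> {x \<in> topspace T. \<phi> x \<in> S}" using e(2) topspace_lc_hausdorff_tvs by auto
    qed
    ultimately show "\<exists>V. openin T V \<and> x \<in> V \<and> V \<subseteq> {x \<in> topspace T. \<phi> x \<in> S}" by blast
  qed
qed simp

theorem open_convex_separation:
  assumes A: "openin T A" "convex A" "c \<in> A" and p: "p \<notin> A"
  obtains \<phi> where "linear \<phi>" "continuous_map T euclideanreal \<phi>" "\<And>a. a \<in> A \<Longrightarrow> \<phi> p < \<phi> a"
proof -
  define U where "U = (\<lambda>x. x - c) ` A"
  have U_iff: "x \<in> U \<longleftrightarrow> x + c \<in> A" for x
    unfolding U_def by (auto intro: image_eqI[of _ _ "x + c"])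
  then have "U = {x. x + c \<in> A}" by blast
  then have "openin T U"
    using openin_continuous_map_preimage[OF continuous_map_tvs_affine[of 1 c] A(1)]
    by (simp add: topspace_lc_hausdorff_tvs)
  moreover have "absorbing_convex U"
  proof
    show "convex U" unfolding U_def by (intro convex_translation_subtract A(2))
    show "0 \<in> U" using A(3) by (simp add: U_iff)
    fix x
    obtain e where e: "e > 0" "\<And>r. \<bar>r\<bar> < e \<Longrightarrow> r *\<^sub>R x + c \<in> A"
      using openin_tvs_line[OF A(1), of 0] A(3) by auto
    then show "\<exists>t>0. (1 / t) *\<^sub>R x \<in> U" by (intro exI[of _ "2 / e"]) (simp add: U_iff)
  qed
  ultimately interpret absorbing_convex U
    by simp
  interpret sublinear "minkowski_functional U"
    by (rule sublinear_minkowski_functional)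
  obtain \<psi> where \<psi>: "linear \<psi>" "\<And>x. \<psi> x \<le> minkowski_functional U x"
    "\<psi> (p - c) = minkowski_functional U (p - c)"
    using Hahn_Banach by blast
  have less_one: "\<psi> u < 1" if u: "u \<in> U" for u
  proof -
    obtain e where e: "e > 0" "\<And>r. \<bar>r - 1\<bar> < e \<Longrightarrow> r *\<^sub>R u + c \<in> A"
      using openin_tvs_line[OF A(1), of 1 u c] u by (auto simp: U_iff)
    then have "(1 + e / 2) *\<^sub>R u \<in> U" by (simp add: U_iff)
    then have "minkowski_functional U u < 1"
      using e(1) by (intro minkowski_functional_less_one[of "e / 2"]) auto
    then show ?thesis using \<psi>(2)[of u] by simp
  qed
  have "1 \<le> \<psi> (p - c)"
    using one_le_minkowski_functional[of "p - c"] p \<psi>(3) by (simp add: U_iff)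
  then have "\<psi> a < \<psi> p" if "a \<in> A" for a
    using less_one[of "a - c"] that linear_diff[OF \<psi>(1)] by (simp add: U_iff)
  moreover have "continuous_map T euclideanreal \<psi>"
    using continuous_map_linear_bounded_above[OF \<open>openin T U\<close> zero_mem \<psi>(1) less_one] .
  ultimately show ?thesis
    using \<psi>(1) by (intro that[of "\<lambda>x. - \<psi> x"]) (auto simp: linear_compose_neg continuous_map_minus)
qed

end

section \<open>The alternative\<close>

lemma quasi_convex_strict_sublevel:
  fixes \<psi> :: "'b::real_vector \<Rightarrow> real"
  assumes "quasi_convex \<psi>"
  shows "convex {y. \<psi> y < s}"
proof (rule convexI)
  fix y z :: 'b and u v :: real
  assume yz: "y \<in> {y. \<psi> y < s}" "z \<in> {y. \<psi> y < s}" and "0 \<le> u" "0 \<le> v" "u + v = 1"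
  moreover have "convex (\<psi> -` {..max (\<psi> y) (\<psi> z)})"
    using assms unfolding quasi_convex_def by blast
  ultimately have "\<psi> (u *\<^sub>R y + v *\<^sub>R z) \<le> max (\<psi> y) (\<psi> z)"
    by (auto dest: convexD[of _ y z u v])
  with yz show "u *\<^sub>R y + v *\<^sub>R z \<in> {y. \<psi> y < s}" by simp
qed

lemma continuous_on_compose_continuous_map:
  assumes "continuous_map (subtopology euclidean \<Omega>) T f" "continuous_map T euclideanreal \<psi>"
  shows "continuous_on \<Omega> (\<lambda>x. \<psi> (f x))"
  using continuous_map_compose[OF assms] by (simp add: o_def)

lemma Limsup_at_within_le_SUP:
  fixes f :: "'a::topological_space \<Rightarrow> 'b::complete_linorder"
  shows "Limsup (at x within S) f \<le> (SUP y\<in>S. f y)"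
  by (rule Limsup_bounded) (auto simp: eventually_at_topological intro: SUP_upper)

lemma frontier_neighbourhood_uniform_bound:
  fixes h :: "'a::topological_space \<Rightarrow> real"
  assumes "open \<Omega>" "compact (frontier \<Omega>)" "frontier \<Omega> \<noteq> {}"
    and limsup: "\<And>z. z \<in> frontier \<Omega> \<Longrightarrow> Limsup (at z within \<Omega>) (\<lambda>x. ereal (h x)) < S"
  obtains r N where "ereal r < S" "open N" "frontier \<Omega> \<subseteq> N" "\<And>x. x \<in> N \<Longrightarrow> x \<in> \<Omega> \<Longrightarrow> h x < r"
proof -
  define N where "N r = \<Union>{V. open V \<and> (\<forall>x\<in>V \<inter> \<Omega>. h x < r)}" for r
  have N_open: "open (N r)" for r unfolding N_def by auto
  have N_bound: "x \<in> N r \<Longrightarrow> x \<in> \<Omega> \<Longrightarrow> h x < r" for x r unfolding N_def by auto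
  have N_mono: "r \<le> r' \<Longrightarrow> N r \<subseteq> N r'" for r r' unfolding N_def by (intro Union_mono) force
  have cover: "frontier \<Omega> \<subseteq> (\<Union>r\<in>{r. ereal r < S}. N r)"
  proof
    fix z assume z: "z \<in> frontier \<Omega>"
    obtain r where r: "Limsup (at z within \<Omega>) (\<lambda>x. ereal (h x)) < ereal r" "ereal r < S"
      using ereal_dense2[OF limsup[OF z]] by blast
    obtain V where V: "open V" "z \<in> V" "\<And>x. x \<in> V \<Longrightarrow> x \<in> \<Omega> \<Longrightarrow> x \<noteq> z \<Longrightarrow> h x < r"
      using Limsup_lessD[OF r(1)] unfolding eventually_at_topological by auto
    have "z \<notin> \<Omega>" using z \<open>open \<Omega>\<close> by (simp add: frontier_def interior_open)
    with V have "\<forall>x\<in>V \<inter> \<Omega>. h x < r" by auto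
    with V(1,2) have "z \<in> N r" unfolding N_def by blast
    with r(2) show "z \<in> (\<Union>r\<in>{r. ereal r < S}. N r)" by blast
  qed
  obtain R where R: "R \<subseteq> {r. ereal r < S}" "finite R" "frontier \<Omega> \<subseteq> (\<Union>r\<in>R. N r)"
    by (rule compactE_image[OF assms(2) N_open cover])
  with assms(3) have "R \<noteq> {}" by auto
  show ?thesis
  proof (rule that[of "Max R" "N (Max R)"])
    show "ereal (Max R) < S" using Max_in[OF R(2) \<open>R \<noteq> {}\<close>] R(1) by blast
    have "N r \<subseteq> N (Max R)" if "r \<in> R" for r using N_mono Max_ge[OF R(2) that] by simp
    then show "frontier \<Omega> \<subseteq> N (Max R)" using R(3) by blast
  qed (simp_all add: N_open N_bound)
qed

lemma compactly_contained_superlevel_set: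
  fixes h :: "'a::topological_space \<Rightarrow> real"
  assumes \<Omega>: "open \<Omega>" "compact (closure \<Omega>)" "frontier \<Omega> \<noteq> {}" and h: "continuous_on \<Omega> h"
    and limsup: "\<And>z. z \<in> frontier \<Omega> \<Longrightarrow>
      Limsup (at z within \<Omega>) (\<lambda>x. ereal (h x)) < (SUP x\<in>\<Omega>. ereal (h x))"
  obtains X x0 where "open X" "closure X \<subseteq> \<Omega>" "compact (closure X)" "x0 \<in> X" "\<Omega> - X \<noteq> {}"
    "\<And>x. x \<in> \<Omega> - X \<Longrightarrow> h x < h x0"
proof -
  have frontier_closure: "frontier \<Omega> \<subseteq> closure \<Omega>" by (auto simp: frontier_def)
  then have "compact (frontier \<Omega>)"
    using compact_Int_closed[OF \<Omega>(2) frontier_closed] by (metis inf.absorb2)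
  then obtain r N where r: "ereal r < (SUP x\<in>\<Omega>. ereal (h x))" and N: "open N" "frontier \<Omega> \<subseteq> N"
    and below: "\<And>x. x \<in> N \<Longrightarrow> x \<in> \<Omega> \<Longrightarrow> h x < r"
    using frontier_neighbourhood_uniform_bound[OF \<Omega>(1) _ \<Omega>(3) limsup] by metis
  obtain r' where r': "r < r'" "ereal r' < (SUP x\<in>\<Omega>. ereal (h x))"
    using ereal_dense2[OF r] by auto
  then obtain x0 where x0: "x0 \<in> \<Omega>" "r' < h x0"
    by (auto simp: less_SUP_iff)
  define X where "X = {x \<in> \<Omega>. r' < h x}"
  have "open X"
    using continuous_open_preimage[OF h \<Omega>(1) open_greaterThan[of r']] by (simp add: X_def Int_def vimage_def conj_commute)
  moreover have "N \<inter> X = {}" using below r'(1) by (force simp: X_def)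
  then have "closure X \<subseteq> \<Omega>"
    using N closure_mono[of X \<Omega>] closure_Un_frontier[of \<Omega>] open_Int_closure_eq_empty[OF N(1), of X]
    by (auto simp: X_def)
  moreover obtain y where "y \<in> N \<inter> \<Omega>"
    using \<Omega>(3) N(2) frontier_closure open_Int_closure_eq_empty[OF N(1), of \<Omega>] by blast
  then have "y \<in> \<Omega> - X" using below[of y] r'(1) by (auto simp: X_def)
  moreover have "compact (closure X)"
    using compact_Int_closed[OF \<Omega>(2) closed_closure] closure_mono[of X \<Omega>]
    by (metis X_def inf.absorb2 mem_Collect_eq subsetI)
  ultimately show ?thesis
    using x0 that[of X x0] by (fastforce simp: X_def)
qed

lemma penalized_minimum_in_open_subset:
  fixes k m :: "'a::topological_space \<Rightarrow> real"
  assumes K: "compact K" and X: "open X" "X \<subseteq> K" "x0 \<in> X"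
    and k: "continuous_on K k" and m: "continuous_on K m"
    and gap: "\<And>x. x \<in> K - X \<Longrightarrow> m x0 < m x"
  obtains l0 where "l0 \<ge> 0" "\<And>l. l > l0 \<Longrightarrow> \<exists>xm\<in>X. \<forall>x\<in>K. k xm + l * m xm \<le> k x + l * m x"
proof -
  have "compact (K - X)" using K X(1) by (simp add: Diff_eq compact_Int_closed closed_Compl)
  obtain \<delta> where \<delta>: "\<delta> > 0" "\<And>x. x \<in> K - X \<Longrightarrow> m x0 + \<delta> \<le> m x"
  proof (cases "K - X = {}")
    case False
    then obtain b where b: "b \<in> K - X" "\<And>x. x \<in> K - X \<Longrightarrow> m b \<le> m x"
      using continuous_attains_inf[OF \<open>compact (K - X)\<close> _ continuous_on_subset[OF m]] by blast
    then show ?thesis using that[of "m b - m x0"] gap[OF b(1)] by force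
  qed (rule that[of 1], auto)
  have "K \<noteq> {}" using X by auto
  obtain kmin kmax where kmin: "\<And>x. x \<in> K \<Longrightarrow> kmin \<le> k x" and kmax: "\<And>x. x \<in> K \<Longrightarrow> k x \<le> kmax"
    using continuous_attains_inf[OF K \<open>K \<noteq> {}\<close> k] continuous_attains_sup[OF K \<open>K \<noteq> {}\<close> k] by metis
  show ?thesis
  proof (rule that[of "max 0 ((kmax - kmin) / \<delta>)"])
    fix l assume l: "max 0 ((kmax - kmin) / \<delta>) < l"
    then have "l > 0" "kmax - kmin < l * \<delta>" using \<delta>(1) by (auto simp: pos_divide_less_eq)
    have "continuous_on K (\<lambda>x. k x + l * m x)" by (intro continuous_intros k m)
    then obtain xm where xm: "xm \<in> K" "\<And>x. x \<in> K \<Longrightarrow> k xm + l * m xm \<le> k x + l * m x"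
      using continuous_attains_inf[OF K \<open>K \<noteq> {}\<close>] by blast
    have "xm \<in> X"
    proof (rule ccontr)
      assume "xm \<notin> X"
      then have "l * m x0 + l * \<delta> \<le> l * m xm"
        using \<delta>(2) xm(1) \<open>l > 0\<close> by (simp flip: distrib_left)
      moreover have "kmin \<le> k xm" "k x0 \<le> kmax" using kmin[OF xm(1)] kmax X by auto
      moreover have "k xm + l * m xm \<le> k x0 + l * m x0" using xm(2) X by auto
      ultimately show False using \<open>kmax - kmin < l * \<delta>\<close> by linarith
    qed
    with xm show "\<exists>xm\<in>X. \<forall>x\<in>K. k xm + l * m xm \<le> k x + l * m x" by blast
  qed simp
qed

lemma supported_at_image_argmin:
  assumes "linear \<phi>" "continuous_map T euclideanreal \<phi>" "\<phi> \<noteq> (\<lambda>_. 0)"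
    and "xm \<in> X" "\<And>x. x \<in> X \<Longrightarrow> \<phi> (F xm) \<le> \<phi> (F x)"
  shows "supported_at T (F ` X) (F xm)"
  using assms unfolding supported_at_def by blast

lemma supported_at_for_large_multiples:
  assumes \<phi>: "linear \<phi>" "continuous_map T euclideanreal \<phi>" "\<phi> \<noteq> (\<lambda>_. 0)"
    and X: "open X" "closure X \<subseteq> \<Omega>" "compact (closure X)" "x0 \<in> X"
    and f: "continuous_map (subtopology euclidean \<Omega>) T f"
    and g: "continuous_map (subtopology euclidean \<Omega>) T g"
    and gap: "\<And>x. x \<in> \<Omega> - X \<Longrightarrow> \<phi> (f x0) < \<phi> (f x)"
  shows "\<exists>l0\<ge>0. \<forall>l>l0. \<exists>y0 \<in> (\<lambda>x. g x + l *\<^sub>R f x) ` X.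
           supported_at T ((\<lambda>x. g x + l *\<^sub>R f x) ` X) y0"
proof -
  have continuous: "continuous_on (closure X) (\<lambda>x. \<phi> (h x))"
    if "continuous_map (subtopology euclidean \<Omega>) T h" for h
    using continuous_on_subset[OF continuous_on_compose_continuous_map[OF that \<phi>(2)] X(2)] .
  obtain l0 where "l0 \<ge> 0" and l0: "\<And>l. l > l0 \<Longrightarrow>
      \<exists>xm\<in>X. \<forall>x\<in>closure X. \<phi> (g xm) + l * \<phi> (f xm) \<le> \<phi> (g x) + l * \<phi> (f x)"
    using penalized_minimum_in_open_subset[OF X(3,1) closure_subset X(4)
        continuous[OF g] continuous[OF f]] gap X(2) by blast
  have "\<exists>y0 \<in> (\<lambda>x. g x + l *\<^sub>R f x) ` X. supported_at T ((\<lambda>x. g x + l *\<^sub>R f x) ` X) y0"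
    if l: "l > l0" for l
  proof -
    have \<phi>_eq: "\<phi> (g x + l *\<^sub>R f x) = \<phi> (g x) + l * \<phi> (f x)" for x
      using linear_add[OF \<phi>(1)] linear_scale[OF \<phi>(1)] by simp
    obtain xm where "xm \<in> X" "\<And>x. x \<in> X \<Longrightarrow> \<phi> (g xm) + l * \<phi> (f xm) \<le> \<phi> (g x) + l * \<phi> (f x)"
      using l0[OF l] closure_subset by blast
    then show ?thesis
      using supported_at_image_argmin[OF \<phi>, of xm X "\<lambda>x. g x + l *\<^sub>R f x"] by (auto simp: \<phi>_eq)
  qed
  with \<open>l0 \<ge> 0\<close> show ?thesis by blast
qed

theorem theorem1:
  fixes \<Omega> :: "'a::topological_space set"
    and T :: "'b::real_vector topology"
    and f :: "'a \<Rightarrow> 'b"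
  assumes "lc_hausdorff_tvs T"
    and "open \<Omega>" and "\<Omega> \<noteq> {}" and "compact (closure \<Omega>)" and "frontier \<Omega> \<noteq> {}"
    and "continuous_map (subtopology euclidean \<Omega>) T f"
  shows "convex_hull_like T f \<Omega> \<or>
    (\<exists>X. open X \<and> X \<noteq> {} \<and> closure X \<subseteq> \<Omega> \<and>
       (\<forall>g. continuous_map (subtopology euclidean \<Omega>) T g \<longrightarrow>
          (\<exists>l0\<ge>0. \<forall>l>l0.
             (\<exists>y0 \<in> (\<lambda>x. g x + l *\<^sub>R f x) ` X.
                supported_at T ((\<lambda>x. g x + l *\<^sub>R f x) ` X) y0))))"
proof (cases "convex_hull_like T f \<Omega>")
  case False
  then obtain \<psi> where \<psi>: "continuous_map T euclideanreal \<psi>" "quasi_convex \<psi>"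
    and "\<And>z. z \<in> frontier \<Omega> \<Longrightarrow>
      Limsup (at z within \<Omega>) (\<lambda>x. ereal (\<psi> (f x))) \<noteq> (SUP x\<in>\<Omega>. ereal (\<psi> (f x)))"
    unfolding convex_hull_like_def by blast
  then have "Limsup (at z within \<Omega>) (\<lambda>x. ereal (\<psi> (f x))) < (SUP x\<in>\<Omega>. ereal (\<psi> (f x)))"
    if "z \<in> frontier \<Omega>" for z
    using Limsup_at_within_le_SUP that by (simp add: order_less_le)
  then obtain X x0 y where X: "open X" "closure X \<subseteq> \<Omega>" "compact (closure X)" "x0 \<in> X" "y \<in> \<Omega> - X"
    and gap: "\<And>x. x \<in> \<Omega> - X \<Longrightarrow> \<psi> (f x) < \<psi> (f x0)"
    using compactly_contained_superlevel_set[OF assms(2,4,5)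
        continuous_on_compose_continuous_map[OF assms(6) \<psi>(1)]] by (metis ex_in_conv)
  have "openin T {a. \<psi> a < \<psi> (f x0)}"
    using openin_continuous_map_preimage[OF \<psi>(1), of "{..<\<psi> (f x0)}"]
    by (simp add: topspace_lc_hausdorff_tvs[OF assms(1)])
  then obtain \<phi> where \<phi>: "linear \<phi>" "continuous_map T euclideanreal \<phi>"
    and separates: "\<And>x. x \<in> \<Omega> - X \<Longrightarrow> \<phi> (f x0) < \<phi> (f x)"
    using open_convex_separation[OF assms(1) _ quasi_convex_strict_sublevel[OF \<psi>(2)],
        where c = "f y" and p = "f x0"]
      gap[OF X(5)] gap by (metis less_irrefl mem_Collect_eq)
  moreover have "\<phi> \<noteq> (\<lambda>_. 0)" using separates[OF X(5)] by auto
  ultimately have "\<forall>g. continuous_map (subtopology euclidean \<Omega>) T g \<longrightarrow>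
      (\<exists>l0\<ge>0. \<forall>l>l0. \<exists>y0 \<in> (\<lambda>x. g x + l *\<^sub>R f x) ` X.
         supported_at T ((\<lambda>x. g x + l *\<^sub>R f x) ` X) y0)"
    using supported_at_for_large_multiples[OF _ _ _ X(1-4) assms(6)] by blast
  then show ?thesis using X(1,2,4) by blast
qed simp

end
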